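(* Let $d\ge1$ and for $k=1,2$ let $(\boldsymbol X_k,Y_k)=(X_{k,1},\ldots,X_{k,d},Y_k)$ be a random vector with continuous marginals and $(d+1)$-dimensional copula $C_k$. Fix $\boldsymbol{\alpha}\in[0,1)^d$ with $C_k(\boldsymbol\alpha,1)<1$ for $k=1,2$, and set $l_{\boldsymbol\alpha}(v)=\dfrac{v-C_1(\boldsymbol\alpha,v)}{v-C_2(\boldsymbol\alpha,v)}$. If $Y_1\le_{\rm st}Y_2$ and $l_{\boldsymbol\alpha}(v)\ge l_{\boldsymbol\alpha}(1)$ for all $v\in(0,1]$, then $$\mathrm{VCoVaR}_{\boldsymbol\alpha,\beta}(Y_1|\boldsymbol X_1)\le \mathrm{VCoVaR}_{\boldsymbol\alpha,\beta}(Y_2|\boldsymbol X_2)\quad\text{for all }\beta\in(0,1).$$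
   Context: $C(\boldsymbol{\alpha},v)=C(\alpha_1,\ldots,\alpha_d,v)$. For a distribution function $F$, $F^{-1}(t)=\inf\{x:F(x)\ge t\}$, $\mathrm{VaR}_t(Z)=F_Z^{-1}(t)$. $\mathrm{VCoVaR}_{\boldsymbol\alpha,\beta}(Y_k|\boldsymbol X_k)$ is the $\beta$-quantile of the conditional distribution of $Y_k$ given $\{\exists\, i: X_{k,i}>\mathrm{VaR}_{\alpha_i}(X_{k,i})\}$. $Y_1\le_{\rm st}Y_2$ (usual stochastic order) means $P(Y_1>x)\le P(Y_2>x)$ for all $x\in\mathbb{R}$. *)

theory Defs
  imports "HOL-Probability.Probability"
begin

definition cdf :: "'a measure \<Rightarrow> ('a \<Rightarrow> real) \<Rightarrow> real \<Rightarrow> real" where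
  "cdf M Z x = measure M {\<omega> \<in> space M. Z \<omega> \<le> x}"

text \<open>Generalised inverse F^{-1}(t) = inf {x. F x \<ge> t}, taken in the extended reals
  (so that e.g. the 0-quantile is -infinity, as in the paper).\<close>
definition gen_inv :: "(real \<Rightarrow> real) \<Rightarrow> real \<Rightarrow> ereal" where
  "gen_inv F t = Inf {ereal x | x. t \<le> F x}"

definition VaR :: "'a measure \<Rightarrow> ('a \<Rightarrow> real) \<Rightarrow> real \<Rightarrow> ereal" where
  "VaR M Z t = gen_inv (cdf M Z) t"

definition stress_event :: "'a measure \<Rightarrow> ('a \<Rightarrow> 'd \<Rightarrow> real) \<Rightarrow> ('d \<Rightarrow> real) \<Rightarrow> 'a set" where
  "stress_event M X \<alpha> = {\<omega> \<in> space M. \<exists>i. ereal (X \<omega> i) > VaR M (\<lambda>\<omega>. X \<omega> i) (\<alpha> i)}"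

definition VCoVaR :: "'a measure \<Rightarrow> ('a \<Rightarrow> 'd \<Rightarrow> real) \<Rightarrow> ('a \<Rightarrow> real) \<Rightarrow> ('d \<Rightarrow> real) \<Rightarrow> real \<Rightarrow> ereal" where
  "VCoVaR M X Y \<alpha> \<beta> =
     gen_inv (\<lambda>y. measure M ({\<omega> \<in> space M. Y \<omega> \<le> y} \<inter> stress_event M X \<alpha>)
                   / measure M (stress_event M X \<alpha>)) \<beta>"

text \<open>(d+1)-dimensional copula, written as a function C u v with u in [0,1]^d, v in [0,1]:
  grounded, uniform one-dimensional margins, and (d+1)-increasing.\<close>
definition is_copula :: "(('d::finite \<Rightarrow> real) \<Rightarrow> real \<Rightarrow> real) \<Rightarrow> bool" where
  "is_copula C \<longleftrightarrow>
     (\<forall>u v. (\<forall>i. u i \<in> {0..1}) \<and> v \<in> {0..1} \<and> ((\<exists>i. u i = 0) \<or> v = 0) \<longrightarrow> C u v = 0) \<and>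
     (\<forall>v \<in> {0..1}. C (\<lambda>_. 1) v = v) \<and>
     (\<forall>i. \<forall>t \<in> {0..1}. C ((\<lambda>_. 1)(i := t)) 1 = t) \<and>
     (\<forall>a b a0 b0. (\<forall>i. 0 \<le> a i \<and> a i \<le> b i \<and> b i \<le> 1) \<and> 0 \<le> a0 \<and> a0 \<le> b0 \<and> b0 \<le> 1 \<longrightarrow>
        0 \<le> (\<Sum>S\<in>Pow (UNIV :: 'd set).
               (-1) ^ card S * (C (\<lambda>i. if i \<in> S then a i else b i) b0
                                - C (\<lambda>i. if i \<in> S then a i else b i) a0)))"

definition is_copula_of :: "'a measure \<Rightarrow> ('a \<Rightarrow> ('d::finite) \<Rightarrow> real) \<Rightarrow> ('a \<Rightarrow> real)
    \<Rightarrow> (('d \<Rightarrow> real) \<Rightarrow> real \<Rightarrow> real) \<Rightarrow> bool" where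
  "is_copula_of M X Y C \<longleftrightarrow> is_copula C \<and>
     (\<forall>x y. measure M {\<omega> \<in> space M. (\<forall>i. X \<omega> i \<le> x i) \<and> Y \<omega> \<le> y}
            = C (\<lambda>i. cdf M (\<lambda>\<omega>. X \<omega> i) (x i)) (cdf M Y y))"

definition st_le :: "'a measure \<Rightarrow> ('a \<Rightarrow> real) \<Rightarrow> 'b measure \<Rightarrow> ('b \<Rightarrow> real) \<Rightarrow> bool" where
  "st_le M1 Y1 M2 Y2 \<longleftrightarrow>
     (\<forall>x. measure M1 {\<omega> \<in> space M1. Y1 \<omega> > x} \<le> measure M2 {\<omega> \<in> space M2. Y2 \<omega> > x})"

end

theory Submission
  imports Defs
begin

text \<open>Outside the stress event every X_i lies below its VaR q_i, and F_i(q_i) = \<alpha>_i by continuity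
  of F_i; so Sklar's relation gives P(Y \<le> y, no stress) = C(\<alpha>, G(y)), and the conditional
  distribution function of Y given the stress event is \<phi>(G(y)) with
  \<phi>(v) = (v - C(\<alpha>, v)) / (1 - C(\<alpha>, 1)). The rectangle inequality of the copula makes \<phi>
  nondecreasing, and the hypothesis on l_\<alpha> says exactly \<phi>_2 \<le> \<phi>_1. With G_2 \<le> G_1
  (stochastic order) this gives \<phi>_2(G_2(y)) \<le> \<phi>_1(G_1(y)) for all y, an inequality the
  generalised inverse reverses.\<close>

lemma gen_inv_le: "t \<le> F x \<Longrightarrow> gen_inv F t \<le> ereal x"
  unfolding gen_inv_def by (rule Inf_lower) auto

lemma gen_inv_antimono:
  assumes "\<And>x. G x \<le> F x"
  shows "gen_inv F t \<le> gen_inv G t"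
  unfolding gen_inv_def
  by (rule Inf_superset_mono) (use assms order_trans in blast)

lemma gen_inv_0:
  assumes "\<And>x. 0 \<le> F x"
  shows "gen_inv F 0 = -\<infinity>"
proof -
  have le: "gen_inv F 0 \<le> ereal x" for x
    using assms by (rule gen_inv_le)
  show ?thesis
  proof (cases "gen_inv F 0")
    case (real r)
    then show ?thesis using le[of "r - 1"] by simp
  next
    case PInf
    then show ?thesis using le[of 0] by simp
  qed simp
qed

lemma gen_inv_attained:
  fixes F :: "real \<Rightarrow> real"
  assumes cont: "continuous_on UNIV F"
    and bot: "(F \<longlongrightarrow> 0) at_bot" and top: "(F \<longlongrightarrow> 1) at_top" and a: "0 < a" "a < 1"
  shows "\<exists>q. F q = a \<and> gen_inv F a = ereal q"
proof -
  define T where "T = {x. a \<le> F x}"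
  obtain b where b: "\<And>x. x \<le> b \<Longrightarrow> F x < a"
    using order_tendstoD(2)[OF bot a(1)] by (auto simp: eventually_at_bot_linorder)
  obtain c where c: "\<And>x. c \<le> x \<Longrightarrow> a < F x"
    using order_tendstoD(1)[OF top a(2)] by (auto simp: eventually_at_top_linorder)
  have "c \<in> T" using c unfolding T_def by (simp add: less_imp_le)
  then have ne: "T \<noteq> {}" by blast
  have lower: "b \<le> x" if "x \<in> T" for x
    using that b[of x] unfolding T_def by fastforce
  then have bdd: "bdd_below T" by (rule bdd_belowI)
  have "closed T"
    unfolding T_def by (rule closed_Collect_le) (use cont in auto)
  define q where "q = Inf T"
  have qT: "q \<in> T"
    unfolding q_def using ne bdd \<open>closed T\<close> by (rule closed_contains_Inf)
  then have "b \<le> q" by (rule lower)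
  \<comment> \<open>the infimum of the closed superlevel set is itself a level point, by the IVT on [b, q]\<close>
  then obtain p where p: "b \<le> p" "p \<le> q" "F p = a"
    using IVT'[of F b a q] b[of b] qT continuous_on_subset[OF cont]
    unfolding T_def by force
  then have "q \<le> p" unfolding q_def T_def by (intro cInf_lower bdd[unfolded T_def]) auto
  with p have "F q = a" by simp
  moreover have "gen_inv F a = ereal q"
    using ereal_Inf'[OF bdd ne] unfolding gen_inv_def q_def T_def by (simp add: setcompr_eq_image)
  ultimately show ?thesis by blast
qed

lemma copula_grounded:
  assumes "is_copula C" "\<forall>i. u i \<in> {0..1}" "v \<in> {0..1}" "(\<exists>i. u i = 0) \<or> v = 0"
  shows "C u v = 0"
  using assms unfolding is_copula_def by blast

lemma copula_ones: "is_copula C \<Longrightarrow> v \<in> {0..1} \<Longrightarrow> C (\<lambda>_. 1) v = v"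
  unfolding is_copula_def by blast

lemma copula_volume_nonneg:
  assumes "is_copula C" "\<forall>i. 0 \<le> a i \<and> a i \<le> b i \<and> b i \<le> 1" "0 \<le> v" "v \<le> w" "w \<le> 1"
  shows "0 \<le> (\<Sum>S\<in>Pow UNIV. (-1) ^ card S *
           (C (\<lambda>i. if i \<in> S then a i else b i) w - C (\<lambda>i. if i \<in> S then a i else b i) v))"
  using assms unfolding is_copula_def by blast

lemma copula_increment_mono_coord:
  fixes C :: "('d::finite \<Rightarrow> real) \<Rightarrow> real \<Rightarrow> real"
  assumes cop: "is_copula C" and b: "\<forall>i. b i \<in> {0..1}" and t: "0 \<le> t" "t \<le> b j"
    and vw: "0 \<le> v" "v \<le> w" "w \<le> 1"
  shows "C (b(j := t)) w - C (b(j := t)) v \<le> C b w - C b v"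
proof -
  define a where "a i = (if i = j then t else 0)" for i
  define corner where "corner S i = (if i \<in> S then a i else b i)" for S i
  define f where "f S = (-1::real) ^ card S * (C (corner S) w - C (corner S) v)" for S
  have corner_01: "\<forall>i. corner S i \<in> {0..1}" for S
    using b t unfolding corner_def a_def by (auto intro: order_trans)
  \<comment> \<open>the volume of [a, b] \<times> [v, w] reduces to the corners b and b(j := t); all others are grounded\<close>
  have "0 \<le> (\<Sum>S\<in>Pow UNIV. f S)"
    unfolding f_def corner_def
  proof (rule copula_volume_nonneg[OF cop])
    show "\<forall>i. 0 \<le> a i \<and> a i \<le> b i \<and> b i \<le> 1"
      using b t unfolding a_def by auto
  qed (use vw in auto)
  also have "(\<Sum>S\<in>Pow UNIV. f S) = (\<Sum>S\<in>{{}, {j}}. f S)"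
  proof (rule sum.mono_neutral_right)
    show "\<forall>S\<in>Pow UNIV - {{}, {j}}. f S = 0"
    proof
      fix S assume "S \<in> Pow UNIV - {{}, {j}}"
      then obtain i where "i \<in> S" "i \<noteq> j" by blast
      then have "\<exists>i. corner S i = 0" unfolding corner_def a_def by auto
      then have "C (corner S) w = 0" "C (corner S) v = 0"
        using copula_grounded[OF cop corner_01] vw by auto
      then show "f S = 0" unfolding f_def by simp
    qed
  qed auto
  also have "corner {} = b" "corner {j} = b(j := t)"
    unfolding corner_def a_def by auto
  then have "(\<Sum>S\<in>{{}, {j}}. f S) = (C b w - C b v) - (C (b(j := t)) w - C (b(j := t)) v)"
    unfolding f_def by simp
  finally show ?thesis by simp
qed

lemma copula_increment_bounds:
  fixes C :: "('d::finite \<Rightarrow> real) \<Rightarrow> real \<Rightarrow> real"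
  assumes cop: "is_copula C" and u: "\<forall>i. u i \<in> {0..1}" and vw: "0 \<le> v" "v \<le> w" "w \<le> 1"
  shows "0 \<le> C u w - C u v" "C u w - C u v \<le> w - v"
proof -
  let ?j = "undefined :: 'd"
  have "C (u(?j := 0)) w - C (u(?j := 0)) v \<le> C u w - C u v"
    by (rule copula_increment_mono_coord) (use cop u vw in auto)
  moreover have "C (u(?j := 0)) w = 0" "C (u(?j := 0)) v = 0"
    by (rule copula_grounded; use cop u vw in auto)+
  ultimately show "0 \<le> C u w - C u v" by simp
  \<comment> \<open>raise the coordinates of u to 1 one at a time\<close>
  have "C u w - C u v \<le> C (\<lambda>i. if i \<in> T then 1 else u i) w - C (\<lambda>i. if i \<in> T then 1 else u i) v"
    if "finite T" for T
    using that
  proof (induction T rule: finite_induct)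
    case empty
    then show ?case by simp
  next
    case (insert j T)
    define u' where "u' i = (if i \<in> T then 1 else u i)" for i
    have "(\<lambda>i. if i \<in> insert j T then 1 else u i) = u'(j := 1)"
      unfolding u'_def by auto
    moreover have "(u'(j := 1))(j := u' j) = u'" by simp
    moreover have "C ((u'(j := 1))(j := u' j)) w - C ((u'(j := 1))(j := u' j)) v
        \<le> C (u'(j := 1)) w - C (u'(j := 1)) v"
      by (rule copula_increment_mono_coord) (use cop u vw in \<open>auto simp: u'_def\<close>)
    ultimately show ?case using insert.IH unfolding u'_def by simp
  qed
  from this[of UNIV] show "C u w - C u v \<le> w - v"
    using copula_ones[OF cop] vw by simp
qed

lemma copula_le_snd:
  fixes C :: "('d::finite \<Rightarrow> real) \<Rightarrow> real \<Rightarrow> real"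
  assumes "is_copula C" "\<forall>i. u i \<in> {0..1}" "v \<in> {0..1}"
  shows "C u v \<le> v"
  using copula_increment_bounds(2)[OF assms(1,2), of 0 v] copula_grounded[OF assms(1,2), of 0] assms(3)
  by simp

lemma copula_diff_mono:
  fixes C :: "('d::finite \<Rightarrow> real) \<Rightarrow> real \<Rightarrow> real"
  assumes "is_copula C" "\<forall>i. u i \<in> {0..1}"
  shows "mono_on {0..1} (\<lambda>v. v - C u v)"
  by (rule mono_onI) (use copula_increment_bounds(2)[OF assms] in fastforce)

lemma (in prob_space) cdf_eq_distr_cdf:
  assumes "Z \<in> borel_measurable M"
  shows "cdf M Z = Distribution_Functions.cdf (distr M borel Z)"
  using assms unfolding cdf_def Distribution_Functions.cdf_def
  by (simp add: measure_distr vimage_def Int_def conj_commute)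

lemma cdf_properties:
  assumes "prob_space M" "Z \<in> borel_measurable M"
  shows "cdf M Z x \<in> {0..1}" "(cdf M Z \<longlongrightarrow> 0) at_bot" "(cdf M Z \<longlongrightarrow> 1) at_top"
proof -
  interpret real_distribution "distr M borel Z"
    using assms by (simp add: prob_space.real_distribution_distr)
  show "cdf M Z x \<in> {0..1}" "(cdf M Z \<longlongrightarrow> 0) at_bot" "(cdf M Z \<longlongrightarrow> 1) at_top"
    unfolding prob_space.cdf_eq_distr_cdf[OF assms]
    by (simp_all add: cdf_nonneg cdf_bounded_prob cdf_lim_at_bot cdf_lim_at_top_prob)
qed

lemma st_le_imp_cdf_le:
  assumes "prob_space M1" "prob_space M2"
    and "Y1 \<in> borel_measurable M1" "Y2 \<in> borel_measurable M2" and "st_le M1 Y1 M2 Y2"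
  shows "cdf M2 Y2 x \<le> cdf M1 Y1 x"
proof -
  have tail: "prob_space.prob M {\<omega> \<in> space M. Y \<omega> > x} = 1 - cdf M Y x"
    if "prob_space M" "Y \<in> borel_measurable M" for M and Y :: "_ \<Rightarrow> real"
  proof -
    interpret prob_space M by fact
    have "{\<omega> \<in> space M. Y \<omega> > x} = space M - {\<omega> \<in> space M. Y \<omega> \<le> x}" by auto
    then show ?thesis
      using prob_compl[of "{\<omega> \<in> space M. Y \<omega> \<le> x}"] that(2) unfolding cdf_def by simp
  qed
  have "measure M1 {\<omega> \<in> space M1. Y1 \<omega> > x} \<le> measure M2 {\<omega> \<in> space M2. Y2 \<omega> > x}"
    using assms(5) unfolding st_le_def by blast
  then show ?thesis
    unfolding tail[OF assms(1,3)] tail[OF assms(2,4)] by simp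
qed

text \<open>The distribution function of V given the event that U_i > \<alpha>_i for some i, when (U, V) has
  distribution function C.\<close>
definition stress_cdf :: "(('d \<Rightarrow> real) \<Rightarrow> real \<Rightarrow> real) \<Rightarrow> ('d \<Rightarrow> real) \<Rightarrow> real \<Rightarrow> real" where
  "stress_cdf C \<alpha> v = (v - C \<alpha> v) / (1 - C \<alpha> 1)"

lemma stress_cdf_nonneg:
  fixes C :: "('d::finite \<Rightarrow> real) \<Rightarrow> real \<Rightarrow> real"
  assumes "is_copula C" "\<forall>i. \<alpha> i \<in> {0..1}" "v \<in> {0..1}"
  shows "0 \<le> stress_cdf C \<alpha> v"
  using copula_le_snd[OF assms] copula_le_snd[OF assms(1,2), of 1]
  unfolding stress_cdf_def by simp

lemma stress_cdf_mono:
  fixes C :: "('d::finite \<Rightarrow> real) \<Rightarrow> real \<Rightarrow> real"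
  assumes "is_copula C" "\<forall>i. \<alpha> i \<in> {0..1}"
  shows "mono_on {0..1} (stress_cdf C \<alpha>)"
proof (rule mono_onI)
  fix v w :: real assume "v \<in> {0..1}" "w \<in> {0..1}" "v \<le> w"
  with copula_diff_mono[OF assms] have "v - C \<alpha> v \<le> w - C \<alpha> w"
    by (rule mono_onD)
  moreover have "0 \<le> 1 - C \<alpha> 1"
    using copula_le_snd[OF assms, of 1] by simp
  ultimately show "stress_cdf C \<alpha> v \<le> stress_cdf C \<alpha> w"
    unfolding stress_cdf_def by (rule divide_right_mono)
qed

lemma stress_cdf_le:
  fixes C1 C2 :: "('d::finite \<Rightarrow> real) \<Rightarrow> real \<Rightarrow> real"
  assumes cop: "is_copula C1" "is_copula C2" and \<alpha>: "\<forall>i. \<alpha> i \<in> {0..1}"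
    and "C1 \<alpha> 1 < 1" "C2 \<alpha> 1 < 1" and v: "v \<in> {0..1}"
    and ratio: "0 < v \<Longrightarrow> (1 - C1 \<alpha> 1) / (1 - C2 \<alpha> 1) \<le> (v - C1 \<alpha> v) / (v - C2 \<alpha> v)"
  shows "stress_cdf C2 \<alpha> v \<le> stress_cdf C1 \<alpha> v"
proof (cases "v - C2 \<alpha> v = 0")
  case True
  then show ?thesis
    using stress_cdf_nonneg[OF cop(1) \<alpha> v] unfolding stress_cdf_def by simp
next
  case False
  moreover have "C2 \<alpha> v \<le> v" by (rule copula_le_snd[OF cop(2) \<alpha> v])
  moreover have "v \<noteq> 0"
    using False copula_grounded[OF cop(2) \<alpha>, of 0] by auto
  ultimately have "0 < v - C2 \<alpha> v" "0 < v" using v by auto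
  then show ?thesis
    using ratio \<open>C1 \<alpha> 1 < 1\<close> \<open>C2 \<alpha> 1 < 1\<close> unfolding stress_cdf_def
    by (simp add: field_simps)
qed

locale stress_model = prob_space M for M :: "'a measure" +
  fixes X :: "'a \<Rightarrow> 'd::finite \<Rightarrow> real" and Y :: "'a \<Rightarrow> real"
    and C :: "('d \<Rightarrow> real) \<Rightarrow> real \<Rightarrow> real" and \<alpha> :: "'d \<Rightarrow> real"
  assumes X_measurable: "\<And>i. (\<lambda>\<omega>. X \<omega> i) \<in> borel_measurable M"
    and Y_measurable: "Y \<in> borel_measurable M"
    and X_cdf_continuous: "\<And>i. continuous_on UNIV (cdf M (\<lambda>\<omega>. X \<omega> i))"
    and copula_of: "is_copula_of M X Y C"
    and alpha: "\<And>i. 0 \<le> \<alpha> i \<and> \<alpha> i < 1"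
begin

lemma copula: "is_copula C"
  using copula_of unfolding is_copula_of_def by blast

lemma alpha_01: "\<forall>i. \<alpha> i \<in> {0..1}"
  using alpha by (auto simp: less_imp_le)

lemma sets_stress_event: "stress_event M X \<alpha> \<in> events"
  unfolding stress_event_def by measurable (use X_measurable in auto)

lemma sets_Y_le: "{\<omega> \<in> space M. Y \<omega> \<le> y} \<in> events"
  using Y_measurable by measurable

lemma measure_Y_le_diff_stress_event:
  "prob ({\<omega> \<in> space M. Y \<omega> \<le> y} - stress_event M X \<alpha>) = C \<alpha> (cdf M Y y)"
proof (cases "\<exists>j. \<alpha> j = 0")
  case True
  then obtain j where "\<alpha> j = 0" by blast
  then have "VaR M (\<lambda>\<omega>. X \<omega> j) (\<alpha> j) = -\<infinity>"
    unfolding VaR_def using cdf_properties(1)[OF prob_space_axioms X_measurable]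
    by (simp add: gen_inv_0)
  then have "stress_event M X \<alpha> = space M"
    unfolding stress_event_def by (auto intro!: exI[of _ j])
  moreover have "C \<alpha> (cdf M Y y) = 0"
    using copula_grounded[OF copula alpha_01] cdf_properties(1)[OF prob_space_axioms Y_measurable] True
    by blast
  ultimately show ?thesis by (simp add: Diff_eq_empty_iff[THEN iffD2])
next
  case False
  then have "\<exists>q. cdf M (\<lambda>\<omega>. X \<omega> i) q = \<alpha> i \<and> VaR M (\<lambda>\<omega>. X \<omega> i) (\<alpha> i) = ereal q" for i
    unfolding VaR_def using alpha[of i]
    by (intro gen_inv_attained X_cdf_continuous cdf_properties prob_space_axioms X_measurable)
       (auto simp: le_less)
  then obtain q where q: "\<And>i. cdf M (\<lambda>\<omega>. X \<omega> i) (q i) = \<alpha> i"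
    "\<And>i. VaR M (\<lambda>\<omega>. X \<omega> i) (\<alpha> i) = ereal (q i)"
    by metis
  have "{\<omega> \<in> space M. Y \<omega> \<le> y} - stress_event M X \<alpha>
      = {\<omega> \<in> space M. (\<forall>i. X \<omega> i \<le> q i) \<and> Y \<omega> \<le> y}"
    unfolding stress_event_def q(2) by (auto simp: not_less dest: leD)
  moreover have "(\<lambda>i. cdf M (\<lambda>\<omega>. X \<omega> i) (q i)) = \<alpha>"
    using q(1) by blast
  moreover have "prob {\<omega> \<in> space M. (\<forall>i. X \<omega> i \<le> q i) \<and> Y \<omega> \<le> y}
      = C (\<lambda>i. cdf M (\<lambda>\<omega>. X \<omega> i) (q i)) (cdf M Y y)"
    using copula_of unfolding is_copula_of_def by blast
  ultimately show ?thesis by simp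
qed

lemma measure_Y_le_Int_stress_event:
  "prob ({\<omega> \<in> space M. Y \<omega> \<le> y} \<inter> stress_event M X \<alpha>) = cdf M Y y - C \<alpha> (cdf M Y y)"
  using finite_measure_Diff'[OF sets_Y_le sets_stress_event] measure_Y_le_diff_stress_event
  unfolding cdf_def by simp

lemma measure_stress_event: "prob (stress_event M X \<alpha>) = 1 - C \<alpha> 1"
proof -
  let ?S = "stress_event M X \<alpha>" and ?G = "cdf M Y"
  let ?B = "\<lambda>y. {\<omega> \<in> space M. Y \<omega> \<le> y}"
  \<comment> \<open>G need not attain 1, so C(\<alpha>, 1) is approached as y \<rightarrow> \<infinity> via the bound C(u, 1) - C(u, v) \<le> 1 - v\<close>
  have bound: "\<bar>prob (space M - ?S) - C \<alpha> 1\<bar> \<le> 1 - ?G y" for y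
  proof -
    have "prob (?B y - ?S) \<le> prob (space M - ?S)"
      by (rule finite_measure_mono) (use sets_stress_event in auto)
    moreover have "prob (space M - ?S) \<le> prob ((?B y - ?S) \<union> (space M - ?B y))"
      by (rule finite_measure_mono) (use sets_stress_event sets_Y_le in auto)
    moreover have "\<dots> \<le> prob (?B y - ?S) + prob (space M - ?B y)"
      by (rule measure_Un_le) (use sets_stress_event sets_Y_le in auto)
    moreover have "prob (space M - ?B y) = 1 - ?G y"
      using prob_compl[OF sets_Y_le] unfolding cdf_def by simp
    moreover have "0 \<le> C \<alpha> 1 - C \<alpha> (?G y)" "C \<alpha> 1 - C \<alpha> (?G y) \<le> 1 - ?G y"
      using copula_increment_bounds[OF copula alpha_01]
        cdf_properties(1)[OF prob_space_axioms Y_measurable, of y] by auto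
    ultimately show ?thesis
      unfolding measure_Y_le_diff_stress_event by linarith
  qed
  have "((\<lambda>y. 1 - ?G y) \<longlongrightarrow> 1 - 1) at_top"
    by (intro tendsto_intros cdf_properties prob_space_axioms Y_measurable)
  with bound have "\<bar>prob (space M - ?S) - C \<alpha> 1\<bar> \<le> 0"
    by (intro tendsto_le[OF trivial_limit_at_top_linorder _ tendsto_const]) auto
  then show ?thesis
    using prob_compl[OF sets_stress_event] by simp
qed

lemma VCoVaR_eq_gen_inv_stress_cdf:
  "VCoVaR M X Y \<alpha> \<beta> = gen_inv (\<lambda>y. stress_cdf C \<alpha> (cdf M Y y)) \<beta>"
  unfolding VCoVaR_def stress_cdf_def measure_Y_le_Int_stress_event measure_stress_event ..

end

theorem theorem4p1:
  fixes M1 :: "'a measure" and M2 :: "'b measure"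
    and X1 :: "'a \<Rightarrow> ('d::finite) \<Rightarrow> real" and Y1 :: "'a \<Rightarrow> real"
    and X2 :: "'b \<Rightarrow> 'd \<Rightarrow> real" and Y2 :: "'b \<Rightarrow> real"
    and C1 C2 :: "('d \<Rightarrow> real) \<Rightarrow> real \<Rightarrow> real"
    and \<alpha> :: "'d \<Rightarrow> real"
  assumes "prob_space M1" and "prob_space M2"
    and "\<And>i. (\<lambda>\<omega>. X1 \<omega> i) \<in> borel_measurable M1" and "Y1 \<in> borel_measurable M1"
    and "\<And>i. (\<lambda>\<omega>. X2 \<omega> i) \<in> borel_measurable M2" and "Y2 \<in> borel_measurable M2"
    and "\<And>i. continuous_on UNIV (cdf M1 (\<lambda>\<omega>. X1 \<omega> i))" and "continuous_on UNIV (cdf M1 Y1)"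
    and "\<And>i. continuous_on UNIV (cdf M2 (\<lambda>\<omega>. X2 \<omega> i))" and "continuous_on UNIV (cdf M2 Y2)"
    and "is_copula_of M1 X1 Y1 C1" and "is_copula_of M2 X2 Y2 C2"
    and "\<And>i. 0 \<le> \<alpha> i \<and> \<alpha> i < 1"
    and "C1 \<alpha> 1 < 1" and "C2 \<alpha> 1 < 1"
    and "st_le M1 Y1 M2 Y2"
    and "\<And>v. 0 < v \<Longrightarrow> v \<le> 1 \<Longrightarrow>
           (v - C1 \<alpha> v) / (v - C2 \<alpha> v) \<ge> (1 - C1 \<alpha> 1) / (1 - C2 \<alpha> 1)"
  shows "\<forall>\<beta>. 0 < \<beta> \<and> \<beta> < 1 \<longrightarrow> VCoVaR M1 X1 Y1 \<alpha> \<beta> \<le> VCoVaR M2 X2 Y2 \<alpha> \<beta>"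
proof -
  interpret m1: stress_model M1 X1 Y1 C1 \<alpha>
    using assms(1,3,4,7,11,13) by (intro stress_model.intro stress_model_axioms.intro)
  interpret m2: stress_model M2 X2 Y2 C2 \<alpha>
    using assms(2,5,6,9,12,13) by (intro stress_model.intro stress_model_axioms.intro)
  have "stress_cdf C2 \<alpha> (cdf M2 Y2 y) \<le> stress_cdf C1 \<alpha> (cdf M1 Y1 y)" for y
  proof -
    have G2: "cdf M2 Y2 y \<in> {0..1}" and G1: "cdf M1 Y1 y \<in> {0..1}"
      using cdf_properties(1) assms(1,2,4,6) by blast+
    have "stress_cdf C2 \<alpha> (cdf M2 Y2 y) \<le> stress_cdf C1 \<alpha> (cdf M2 Y2 y)"
      by (rule stress_cdf_le[OF m1.copula m2.copula m1.alpha_01 assms(14,15) G2 assms(17)])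
        (use G2 in auto)
    also have "\<dots> \<le> stress_cdf C1 \<alpha> (cdf M1 Y1 y)"
      using stress_cdf_mono[OF m1.copula m1.alpha_01] G2 G1 st_le_imp_cdf_le[OF assms(1,2,4,6,16)]
      by (rule mono_onD)
    finally show ?thesis .
  qed
  then show ?thesis
    unfolding m1.VCoVaR_eq_gen_inv_stress_cdf m2.VCoVaR_eq_gen_inv_stress_cdf
    by (blast intro: gen_inv_antimono)
qed

end
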